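(* Consider the general $\alpha$-cap process described in the context. Let $H$ be an oriented hyperplane. Suppose that for some $t\ge1$, $\psi_t(x)\le\psi_t(x^H)$ for all $x\in H^-$. Then for all $s\ge t$ and all $x\in H^-$, $\psi_s(x)\le\psi_s(x^H)$.
   Context: An oriented hyperplane is $H=\{x\in\mathbb{R}^d:\langle x,u\rangle=a\}$ with $u$ a unit vector and $a\in\mathbb{R}$ (the pair $(u,a)$ is part of the data); $H^-=\{x:\langle x,u\rangle<a\}$, $H^+=\{x:\langle x,u\rangle>a\}$, and $x^H=x-2(\langle x,u\rangle-a)u$ is the reflection of $x$ across $H$. Kernel assumptions: $g:\mathbb{R}^d\to[0,1]$ satisfies $g(x)=\tilde g(\|x\|)$; $g(0)=1$, $g>0$; $g$ is $L$-Lipschitz with continuous first and second derivatives; $\tilde g'(r)<0$ for $r>0$. General $\alpha$-cap process: $\psi_0:\mathbb{R}^d\to[0,1]$ measurable and integrable; $\gamma_t:[0,\infty)\to[0,1]$ monotone increasing; for $t\ge0$, $f_t(x)=\int_{\mathbb{R}^d}\psi_t(y)g(x-y)\,dy$ and $\psi_{t+1}=\gamma_t\circ f_t$; there is $R>0$ with $\gamma_t(f_t(x))=0$ whenever $\|x\|>R$, for all $t$. *)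

theory Defs
  imports "HOL-Analysis.Analysis"
begin

text \<open>Reflection of x across the oriented hyperplane H = {x. x \<bullet> u = a}.\<close>
definition hreflect :: "'a::euclidean_space \<Rightarrow> real \<Rightarrow> 'a \<Rightarrow> 'a" where
  "hreflect u a x = x - (2 * (x \<bullet> u - a)) *\<^sub>R u"

definition hminus :: "'a::euclidean_space \<Rightarrow> real \<Rightarrow> 'a set" where
  "hminus u a = {x. x \<bullet> u < a}"

definition cap_kernel :: "('a::euclidean_space \<Rightarrow> real) \<Rightarrow> (real \<Rightarrow> real) \<Rightarrow> real \<Rightarrow> bool" where
  "cap_kernel g gt L \<longleftrightarrow>
     (\<forall>x. 0 \<le> g x \<and> g x \<le> 1) \<and>
     (\<forall>x. g x = gt (norm x)) \<and>
     g 0 = 1 \<and> (\<forall>x. g x > 0) \<and>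
     L-lipschitz_on UNIV g \<and>
     (\<exists>Dg D2g. (\<forall>x. (g has_derivative blinfun_apply (Dg x)) (at x)) \<and>
               (\<forall>x. (Dg has_derivative blinfun_apply (D2g x)) (at x)) \<and>
               continuous_on UNIV Dg \<and> continuous_on UNIV D2g) \<and>
     (\<forall>r>0. \<exists>D. (gt has_real_derivative D) (at r) \<and> D < 0)"

definition cap_field :: "('a::euclidean_space \<Rightarrow> real) \<Rightarrow> ('a \<Rightarrow> real) \<Rightarrow> 'a \<Rightarrow> real" where
  "cap_field g \<psi> x = (\<integral>y. \<psi> y * g (x - y) \<partial>lebesgue)"

definition cap_process :: "('a::euclidean_space \<Rightarrow> real) \<Rightarrow> (nat \<Rightarrow> real \<Rightarrow> real) \<Rightarrow> (nat \<Rightarrow> 'a \<Rightarrow> real) \<Rightarrow> bool" where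
  "cap_process g \<gamma> \<psi> \<longleftrightarrow>
     \<psi> 0 \<in> borel_measurable lebesgue \<and> integrable lebesgue (\<psi> 0) \<and>
     (\<forall>x. 0 \<le> \<psi> 0 x \<and> \<psi> 0 x \<le> 1) \<and>
     (\<forall>t. mono_on {0..} (\<gamma> t) \<and> (\<forall>r\<ge>0. 0 \<le> \<gamma> t r \<and> \<gamma> t r \<le> 1)) \<and>
     (\<forall>t x. \<psi> (Suc t) x = \<gamma> t (cap_field g (\<psi> t) x)) \<and>
     (\<exists>R>0. \<forall>t x. norm x > R \<longrightarrow> \<gamma> t (cap_field g (\<psi> t) x) = 0)"

end

theory Submission
  imports Defs
begin

(* Write z^H for the reflection of z.  The substitution z \<mapsto> z^H preserves Lebesgue measure and
   |x^H - z^H| = |x - z|, so for a radial kernel g and f = cap_field g h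
     2 (f x^H - f x) = \<integral> (h z^H - h z) (g (x - z) - g (x - z^H)) dz.
   For x \<in> H^- the two factors have the same sign for every z: if z \<in> H^- the first is
   nonnegative by hypothesis and the second because z is closer to x than z^H and g decreases
   radially; if z \<in> H^+ both signs flip.  So f_t x \<le> f_t x^H, the monotone \<gamma>_t turns this into
   \<psi>_(t+1) x \<le> \<psi>_(t+1) x^H, and induction on s finishes the proof. *)

lemma inj_isometry:
  assumes "\<And>x y. dist (f x) (f y) = dist x y"
  shows "inj f"
  using assms by (metis dist_eq_0_iff injI)

lemma isometry_image_ball:
  assumes iso: "\<And>x y. dist (f x) (f y) = dist x y" and "surj f"
  shows "f ` ball c r = ball (f c) r"
proof
  show "f ` ball c r \<subseteq> ball (f c) r"
    using iso by auto
  show "ball (f c) r \<subseteq> f ` ball c r"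
  proof
    fix y assume "y \<in> ball (f c) r"
    moreover obtain z where "y = f z" using \<open>surj f\<close> by (metis surjD)
    ultimately show "y \<in> f ` ball c r" using iso by auto
  qed
qed

lemma emeasure_lebesgue_disjoint_balls:
  fixes c :: "'i \<Rightarrow> 'a::euclidean_space"
  assumes "countable C" and "disjoint_family_on (\<lambda>i. ball (c i) (r i)) C"
  shows "emeasure lebesgue (\<Union>i\<in>C. ball (c i) (r i))
           = (\<integral>\<^sup>+i. emeasure lebesgue (ball (0::'a) (r i)) \<partial>count_space C)"
proof -
  have "emeasure lebesgue (\<Union>i\<in>C. ball (c i) (r i))
          = (\<integral>\<^sup>+i. emeasure lebesgue (ball (c i) (r i)) \<partial>count_space C)"
    using assms by (intro emeasure_UN_countable fmeasurableD[OF lmeasurable_ball])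
  also have "\<dots> = (\<integral>\<^sup>+i. emeasure lebesgue (ball (0::'a) (r i)) \<partial>count_space C)"
  proof (rule nn_integral_cong)
    fix i
    show "emeasure lebesgue (ball (c i) (r i)) = emeasure lebesgue (ball (0::'a) (r i))"
    proof (cases "r i \<ge> 0")
      case True
      show ?thesis
        using emeasure_lebesgue_ball_conv_unit_ball[OF True, of "c i"]
          emeasure_lebesgue_ball_conv_unit_ball[OF True, of "0::'a"]
        by (simp only:)
    next
      case False
      then have "ball (c i) (r i) = {}" "ball (0::'a) (r i) = {}" by auto
      then show ?thesis by (simp only:)
    qed
  qed
  finally show ?thesis .
qed

(* An open set is, up to a null set, a countable disjoint union of balls (Vitali), and an
   isometry maps such a union to a disjoint union of balls with the same radii. *)
lemma emeasure_lebesgue_isometry_image_open: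
  fixes f :: "'a::euclidean_space \<Rightarrow> 'a"
  assumes iso: "\<And>x y. dist (f x) (f y) = dist x y" and "surj f" and "open S"
  shows "emeasure lebesgue (f ` S) = emeasure lebesgue S"
proof -
  define K where "K = {(c, r). 0 < r \<and> ball c r \<subseteq> S}"
  have "\<exists>i. i \<in> K \<and> x \<in> ball (fst i) (snd i) \<and> snd i < d" if "x \<in> S" "0 < d" for x d
  proof -
    obtain e where "e > 0" "ball x e \<subseteq> S" using \<open>open S\<close> \<open>x \<in> S\<close> open_contains_ball by blast
    then show ?thesis
      using that by (intro exI[of _ "(x, min e d / 2)"]) (auto simp: K_def)
  qed
  then obtain C where C: "countable C" "C \<subseteq> K"
     "pairwise (\<lambda>i j. disjnt (ball (fst i) (snd i)) (ball (fst j) (snd j))) C"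
     "negligible (S - (\<Union>i \<in> C. ball (fst i) (snd i)))"
    using Vitali_covering_theorem_balls[of S K fst snd] by blast
  define U where "U = (\<Union>i \<in> C. ball (fst i) (snd i))"
  have "U \<subseteq> S" using C(2) unfolding U_def K_def by fastforce
  have null: "S - U \<in> null_sets lebesgue"
    using C(4) by (simp add: U_def negligible_iff_null_sets)
  have "inj f"
    using iso by (rule inj_isometry)
  have fU: "f ` U = (\<Union>i \<in> C. ball (f (fst i)) (snd i))"
    by (simp add: U_def image_UN isometry_image_ball[OF iso \<open>surj f\<close>])
  have disj: "disjoint_family_on (\<lambda>i. ball (fst i) (snd i)) C"
    using C(3) by (auto simp: disjoint_family_on_def pairwise_def disjnt_def)
  then have disj': "disjoint_family_on (\<lambda>i. ball (f (fst i)) (snd i)) C"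
    by (simp add: disjoint_family_on_def image_Int[OF \<open>inj f\<close>, symmetric]
        isometry_image_ball[OF iso \<open>surj f\<close>, symmetric])
  have null': "f ` (S - U) \<in> null_sets lebesgue"
  proof -
    have "negligible (f ` (S - U))"
    proof (rule negligible_locally_Lipschitz_image)
      show "negligible (S - U)" using null by (simp add: negligible_iff_null_sets)
      show "\<exists>T B. open T \<and> x \<in> T \<and> (\<forall>y \<in> (S - U) \<inter> T. norm (f y - f x) \<le> B * norm (y - x))"
        for x
        using iso by (intro exI[of _ UNIV] exI[of _ 1]) (simp add: dist_norm)
    qed simp
    then show ?thesis by (simp add: negligible_iff_null_sets)
  qed
  have "emeasure lebesgue (f ` S) = emeasure lebesgue (f ` U \<union> f ` (S - U))"
    using \<open>U \<subseteq> S\<close> by (metis Un_Diff_cancel sup.absorb2 image_Un)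
  also have "\<dots> = emeasure lebesgue (f ` U)"
    by (rule emeasure_Un_null_set[OF _ null']) (auto simp: fU intro!: sets_completionI_sets borel_open open_UN)
  also have "\<dots> = emeasure lebesgue U"
    unfolding fU
    by (simp only: U_def emeasure_lebesgue_disjoint_balls[OF C(1) disj]
        emeasure_lebesgue_disjoint_balls[OF C(1) disj'])
  also have "\<dots> = emeasure lebesgue (U \<union> (S - U))"
    by (rule emeasure_Un_null_set[symmetric, OF _ null]) (auto simp: U_def intro!: sets_completionI_sets borel_open open_UN)
  also have "U \<union> (S - U) = S"
    using \<open>U \<subseteq> S\<close> by blast
  finally show ?thesis .
qed

lemma borel_measurable_isometry:
  fixes f :: "'a::metric_space \<Rightarrow> 'b::metric_space"
  assumes "\<And>x y. dist (f x) (f y) = dist x y"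
  shows "f \<in> borel_measurable borel"
  using assms
  by (intro borel_measurable_continuous_onI lipschitz_on_continuous_on[of 1] lipschitz_onI) auto

lemma distr_lborel_isometry:
  fixes f :: "'a::euclidean_space \<Rightarrow> 'a"
  assumes iso: "\<And>x y. dist (f x) (f y) = dist x y" and "surj f"
  shows "distr lborel lborel f = lborel"
proof (rule lborel_eqI[symmetric])
  have "inj f"
    using iso by (rule inj_isometry)
  then have "bij f"
    using \<open>surj f\<close> by (simp add: bij_def)
  have iso_inv: "dist (inv f x) (inv f y) = dist x y" for x y
    using iso[of "inv f x" "inv f y"] \<open>surj f\<close> by (simp add: surj_f_inv_f)
  have "surj (inv f)"
    using \<open>inj f\<close> by (rule inj_imp_surj_inv)
  have meas: "f \<in> borel_measurable borel"
    using iso by (rule borel_measurable_isometry)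
  show "sets (distr lborel lborel f) = sets borel" by simp
  fix l x :: 'a
  assume "\<And>b. b \<in> Basis \<Longrightarrow> l \<bullet> b \<le> x \<bullet> b"
  then have box: "emeasure lborel (box l x) = (\<Prod>b\<in>Basis. (x - l) \<bullet> b)"
    by (simp add: emeasure_lborel_box_eq inner_diff_left)
  have "emeasure (distr lborel lborel f) (box l x) = emeasure lborel (f -` box l x)"
    using meas by (subst emeasure_distr) auto
  also have "\<dots> = emeasure lebesgue (inv f ` box l x)"
    using measurable_sets_borel[OF meas, of "box l x"] bij_vimage_eq_inv_image[OF \<open>bij f\<close>]
    by simp
  also have "\<dots> = emeasure lebesgue (box l x)"
    by (rule emeasure_lebesgue_isometry_image_open[OF iso_inv \<open>surj (inv f)\<close> open_box])
  finally show "emeasure (distr lborel lborel f) (box l x) = (\<Prod>b\<in>Basis. (x - l) \<bullet> b)"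
    using box by simp
qed

lemma
  fixes f :: "'a::euclidean_space \<Rightarrow> 'a" and h :: "'a \<Rightarrow> real"
  assumes iso: "\<And>x y. dist (f x) (f y) = dist x y" and "surj f"
    and hm: "h \<in> borel_measurable borel"
  shows integral_lborel_isometry: "(\<integral>z. h (f z) \<partial>lborel) = (\<integral>z. h z \<partial>lborel)"
    and integrable_lborel_isometry_iff: "integrable lborel (\<lambda>z. h (f z)) \<longleftrightarrow> integrable lborel h"
proof -
  have fm: "f \<in> measurable lborel lborel"
    using borel_measurable_isometry[OF iso] by simp
  have hm': "h \<in> borel_measurable lborel"
    using hm by simp
  show "(\<integral>z. h (f z) \<partial>lborel) = (\<integral>z. h z \<partial>lborel)"
    using integral_distr[OF fm hm'] distr_lborel_isometry[OF iso \<open>surj f\<close>] by simp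
  show "integrable lborel (\<lambda>z. h (f z)) \<longleftrightarrow> integrable lborel h"
    using integrable_distr_eq[OF fm hm'] distr_lborel_isometry[OF iso \<open>surj f\<close>] by simp
qed

lemma hreflect_hreflect:
  assumes "norm u = 1"
  shows "hreflect u a (hreflect u a x) = x"
proof -
  have "u \<bullet> u = 1" using assms by (simp add: norm_eq_1)
  then show ?thesis
    unfolding hreflect_def by (simp add: algebra_simps inner_diff_left)
qed

lemma surj_hreflect:
  assumes "norm u = 1"
  shows "surj (hreflect u a)"
  using hreflect_hreflect[OF assms] by (metis surjI)

lemma inner_hreflect:
  assumes "norm u = 1"
  shows "hreflect u a z \<bullet> u - a = - (z \<bullet> u - a)"
proof -
  have "u \<bullet> u = 1" using assms by (simp add: norm_eq_1)
  then show ?thesis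
    unfolding hreflect_def by (simp add: inner_diff_left algebra_simps)
qed

lemma dist_hreflect:
  assumes "norm u = 1"
  shows "dist (hreflect u a x) (hreflect u a y) = dist x y"
proof -
  have uu: "u \<bullet> u = 1" using assms by (simp add: norm_eq_1)
  have diff: "hreflect u a x - hreflect u a y = (x - y) - (2 * ((x - y) \<bullet> u)) *\<^sub>R u"
    unfolding hreflect_def by (simp add: algebra_simps inner_diff_left)
  have "(norm (hreflect u a x - hreflect u a y))\<^sup>2 = (norm (x - y))\<^sup>2"
    unfolding diff power2_norm_eq_inner
    by (simp add: inner_diff_left inner_diff_right uu inner_commute algebra_simps power2_eq_square)
  then show ?thesis by (simp add: dist_norm power2_eq_iff_nonneg)
qed

lemma norm_diff_le_norm_diff_hreflect:
  assumes "norm u = 1" and "0 \<le> (x \<bullet> u - a) * (z \<bullet> u - a)"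
  shows "norm (x - z) \<le> norm (x - hreflect u a z)"
proof -
  have uu: "u \<bullet> u = 1" using assms by (simp add: norm_eq_1)
  have diff: "x - hreflect u a z = (x - z) + (2 * (z \<bullet> u - a)) *\<^sub>R u"
    unfolding hreflect_def by simp
  have sq: "(norm (x - hreflect u a z))\<^sup>2 = (norm (x - z))\<^sup>2 + 4 * (z \<bullet> u - a) * (x \<bullet> u - a)"
    unfolding diff power2_norm_eq_inner
    by (simp add: inner_add_left inner_add_right inner_diff_left inner_diff_right uu inner_commute
        algebra_simps)
  moreover have "4 * (z \<bullet> u - a) * (x \<bullet> u - a) = 4 * ((x \<bullet> u - a) * (z \<bullet> u - a))"
    by (simp only: mult.assoc mult.commute)
  ultimately have "(norm (x - z))\<^sup>2 \<le> (norm (x - hreflect u a z))\<^sup>2"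
    using assms(2) by linarith
  then show ?thesis
    by (rule power2_le_imp_le) simp
qed

lemma cap_kernel_antimono:
  assumes "cap_kernel g gt L" and "norm v \<le> norm w"
  shows "g w \<le> g v"
proof (cases "v = 0")
  case True
  then show ?thesis
    using assms(1) unfolding cap_kernel_def by auto
next
  case False
  have radial: "\<And>x. g x = gt (norm x)"
    and deriv: "\<And>r. r > 0 \<Longrightarrow> \<exists>D. (gt has_real_derivative D) (at r) \<and> D < 0"
    using assms(1) unfolding cap_kernel_def by blast+
  have "gt (norm w) \<le> gt (norm v)"
  proof (rule DERIV_nonpos_imp_nonincreasing[OF assms(2)])
    fix r assume "norm v \<le> r" "r \<le> norm w"
    then have "r > 0"
      using False by (metis order_less_le_trans zero_less_norm_iff)
    then obtain D where "(gt has_real_derivative D) (at r)" "D < 0"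
      using deriv by blast
    then show "\<exists>D. (gt has_real_derivative D) (at r) \<and> D \<le> 0"
      by (intro exI[of _ D]) simp
  qed
  then show ?thesis
    by (simp add: radial)
qed

lemma integrable_mult_bounded:
  fixes k G :: "'b \<Rightarrow> real"
  assumes "integrable M k" and "G \<in> borel_measurable M" and "\<And>z. \<bar>G z\<bar> \<le> 1"
  shows "integrable M (\<lambda>z. k z * G z)"
proof (rule Bochner_Integration.integrable_bound[OF assms(1)])
  show "(\<lambda>z. k z * G z) \<in> borel_measurable M"
    using assms(1,2) by simp
  show "AE z in M. norm (k z * G z) \<le> norm (k z)"
    using assms(3) by (auto simp: abs_mult intro!: mult_left_le)
qed

lemma borel_measurable_mono_on_comp:
  fixes G :: "real \<Rightarrow> real"
  assumes "mono_on {0..} G" and "F \<in> borel_measurable M" and "\<And>x. 0 \<le> F x"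
  shows "(\<lambda>x. G (F x)) \<in> borel_measurable M"
proof -
  have "mono (\<lambda>r. G (max 0 r))"
    using mono_onD[OF assms(1)] by (auto simp: mono_def)
  then have "(\<lambda>r. G (max 0 r)) \<in> borel_measurable borel"
    by (rule borel_measurable_mono)
  from measurable_compose[OF assms(2) this] show ?thesis
    using assms(3) by (simp add: max_absorb2)
qed

lemma borel_measurable_comp_diff_left:
  fixes g :: "'a::real_normed_vector \<Rightarrow> 'b::topological_space"
  assumes "g \<in> borel_measurable borel"
  shows "(\<lambda>z. g (y - z)) \<in> borel_measurable borel"
proof -
  have "(\<lambda>z. y - z) \<in> borel_measurable borel"
    by (intro borel_measurable_continuous_onI continuous_intros)
  from measurable_compose[OF this assms] show ?thesis .
qed

lemma cap_field_nonneg: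
  assumes "\<And>y. 0 \<le> \<psi> y" and "\<And>y. 0 \<le> g y"
  shows "0 \<le> cap_field g \<psi> x"
  unfolding cap_field_def using assms by (intro Bochner_Integration.integral_nonneg) simp

lemma cap_field_eq_integral_lborel:
  assumes "g \<in> borel_measurable borel" and "h \<in> borel_measurable borel"
  shows "cap_field g h y = (\<integral>z. h z * g (y - z) \<partial>lborel)"
  unfolding cap_field_def
  using assms borel_measurable_comp_diff_left[OF assms(1)] by (intro integral_completion) simp

lemma continuous_on_cap_field:
  fixes g \<psi> :: "'a::euclidean_space \<Rightarrow> real"
  assumes lip: "L-lipschitz_on UNIV g" and gb: "\<And>y. \<bar>g y\<bar> \<le> 1"
    and \<psi>: "integrable lebesgue \<psi>"
  shows "continuous_on UNIV (cap_field g \<psi>)"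
proof -
  have "g \<in> borel_measurable borel"
    using lip by (intro borel_measurable_continuous_onI lipschitz_on_continuous_on)
  then have gxm: "(\<lambda>z. g (y - z)) \<in> borel_measurable lebesgue" for y
    by (intro measurable_completion) (simp add: borel_measurable_comp_diff_left)
  have I: "integrable lebesgue (\<lambda>z. \<psi> z * g (y - z))" for y
    using \<psi> gxm gb by (rule integrable_mult_bounded)
  have "(L * (\<integral>z. \<bar>\<psi> z\<bar> \<partial>lebesgue))-lipschitz_on UNIV (cap_field g \<psi>)"
  proof (rule lipschitz_onI)
    show "0 \<le> L * (\<integral>z. \<bar>\<psi> z\<bar> \<partial>lebesgue)"
      using lipschitz_on_nonneg[OF lip] by simp
    fix x y :: 'a
    have "dist (cap_field g \<psi> x) (cap_field g \<psi> y)
            = norm (\<integral>z. \<psi> z * (g (x - z) - g (y - z)) \<partial>lebesgue)"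
      unfolding cap_field_def dist_norm using I[of x] I[of y] by (simp add: right_diff_distrib)
    also have "\<dots> \<le> (\<integral>z. \<bar>\<psi> z\<bar> * (L * dist x y) \<partial>lebesgue)"
    proof (rule Bochner_Integration.integral_norm_bound_integral)
      show "integrable lebesgue (\<lambda>z. \<psi> z * (g (x - z) - g (y - z)))"
        using I[of x] I[of y] by (simp add: right_diff_distrib)
      show "integrable lebesgue (\<lambda>z. \<bar>\<psi> z\<bar> * (L * dist x y))"
        using \<psi> by simp
      fix z
      have "\<bar>g (x - z) - g (y - z)\<bar> \<le> L * dist (x - z) (y - z)"
        using lipschitz_onD[OF lip, of "x - z" "y - z"] by (simp add: dist_real_def)
      also have "dist (x - z) (y - z) = dist x y"
        by (simp add: dist_norm)
      finally show "norm (\<psi> z * (g (x - z) - g (y - z))) \<le> \<bar>\<psi> z\<bar> * (L * dist x y)"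
        by (simp add: abs_mult mult_left_mono)
    qed
    also have "\<dots> = L * (\<integral>z. \<bar>\<psi> z\<bar> \<partial>lebesgue) * dist x y"
      using \<psi> by simp
    finally show "dist (cap_field g \<psi> x) (cap_field g \<psi> y)
                    \<le> L * (\<integral>z. \<bar>\<psi> z\<bar> \<partial>lebesgue) * dist x y" .
  qed
  then show ?thesis
    by (rule lipschitz_on_continuous_on)
qed

lemma cap_field_hreflect_diff:
  fixes g h :: "'a::euclidean_space \<Rightarrow> real"
  assumes u: "norm u = 1"
    and radial: "\<And>v w. norm v = norm w \<Longrightarrow> g v = g w"
    and gm: "g \<in> borel_measurable borel" and gb: "\<And>y. \<bar>g y\<bar> \<le> 1"
    and hm: "h \<in> borel_measurable borel" and hi: "integrable lborel h"
  shows "2 * (cap_field g h (hreflect u a x) - cap_field g h x)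
           = (\<integral>z. (h (hreflect u a z) - h z) * (g (x - z) - g (x - hreflect u a z)) \<partial>lborel)"
proof -
  let ?r = "hreflect u a"
  note iso = dist_hreflect[OF u, of a] and surj = surj_hreflect[OF u, of a]
  have rm: "?r \<in> borel_measurable borel"
    using iso by (rule borel_measurable_isometry)
  have hrm: "(\<lambda>z. h (?r z)) \<in> borel_measurable borel"
    using measurable_compose[OF rm hm] .
  have hri: "integrable lborel (\<lambda>z. h (?r z))"
    using integrable_lborel_isometry_iff[OF iso surj hm] hi by simp
  have gxm: "(\<lambda>z. g (y - z)) \<in> borel_measurable borel" for y
    using gm by (rule borel_measurable_comp_diff_left)
  have grm: "(\<lambda>z. g (y - ?r z)) \<in> borel_measurable borel" for y
    using measurable_compose[OF rm gxm] .
  have g_hreflect: "g (?r y - ?r z) = g (y - z)" for y z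
    by (rule radial) (use iso[of y z] in \<open>simp add: dist_norm\<close>)
  have cf: "cap_field g h y = (\<integral>z. h z * g (y - z) \<partial>lborel)" for y
    using gm hm by (rule cap_field_eq_integral_lborel)
  have A: "cap_field g h (?r x) = (\<integral>z. h (?r z) * g (x - z) \<partial>lborel)"
    unfolding cf
    using integral_lborel_isometry[OF iso surj, of "\<lambda>z. h z * g (?r x - z)"] hm gxm
    by (simp add: g_hreflect)
  have B: "cap_field g h (?r x) = (\<integral>z. h z * g (x - ?r z) \<partial>lborel)"
    unfolding A
    using integral_lborel_isometry[OF iso surj, of "\<lambda>z. h (?r z) * g (x - z)"] hrm gxm
    by (simp add: hreflect_hreflect[OF u])
  have C: "cap_field g h x = (\<integral>z. h (?r z) * g (x - ?r z) \<partial>lborel)"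
    unfolding cf
    using integral_lborel_isometry[OF iso surj, of "\<lambda>z. h z * g (x - z)"] hm gxm by simp
  have "integrable lborel (\<lambda>z. h z * g (x - z))"
    "integrable lborel (\<lambda>z. h (?r z) * g (x - z))"
    "integrable lborel (\<lambda>z. h z * g (x - ?r z))"
    "integrable lborel (\<lambda>z. h (?r z) * g (x - ?r z))"
    using hi hri gxm grm gb by (auto intro!: integrable_mult_bounded)
  moreover have "(\<integral>z. (h (?r z) - h z) * (g (x - z) - g (x - ?r z)) \<partial>lborel)
      = (\<integral>z. (h (?r z) * g (x - z) + h z * g (x - ?r z))
             - (h z * g (x - z) + h (?r z) * g (x - ?r z)) \<partial>lborel)"
    by (rule Bochner_Integration.integral_cong) (simp_all add: algebra_simps)
  ultimately show ?thesis
    using A B C cf[of x] by simp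
qed

lemma hreflect_dominated_product_nonneg:
  fixes g h :: "'a::euclidean_space \<Rightarrow> real"
  assumes u: "norm u = 1"
    and antimono: "\<And>v w. norm v \<le> norm w \<Longrightarrow> g w \<le> g v"
    and dom: "\<forall>y\<in>hminus u a. h y \<le> h (hreflect u a y)"
    and x: "x \<in> hminus u a"
  shows "0 \<le> (h (hreflect u a z) - h z) * (g (x - z) - g (x - hreflect u a z))"
proof -
  let ?r = "hreflect u a"
  have x_side: "x \<bullet> u - a < 0"
    using x by (simp add: hminus_def)
  consider "z \<bullet> u < a" | "z \<bullet> u = a" | "z \<bullet> u > a"
    by linarith
  then show ?thesis
  proof cases
    case 1
    then have "h z \<le> h (?r z)"
      using dom by (simp add: hminus_def)
    moreover have "g (x - ?r z) \<le> g (x - z)"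
      using 1 x_side
      by (intro antimono norm_diff_le_norm_diff_hreflect[OF u]) (simp add: mult_nonpos_nonpos)
    ultimately show ?thesis
      by (intro mult_nonneg_nonneg) simp_all
  next
    case 2
    then have "?r z = z"
      by (simp add: hreflect_def)
    then show ?thesis
      by simp
  next
    case 3
    then have "?r z \<in> hminus u a"
      using inner_hreflect[OF u, of a z] by (simp add: hminus_def)
    then have "h (?r z) \<le> h z"
      using dom hreflect_hreflect[OF u] by metis
    moreover have "norm (x - ?r z) \<le> norm (x - ?r (?r z))"
      using 3 x_side inner_hreflect[OF u, of a z]
      by (intro norm_diff_le_norm_diff_hreflect[OF u]) (simp add: mult_nonpos_nonpos)
    then have "g (x - z) \<le> g (x - ?r z)"
      by (intro antimono) (simp add: hreflect_hreflect[OF u])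
    ultimately show ?thesis
      by (intro mult_nonpos_nonpos) simp_all
  qed
qed

lemma cap_field_hreflect_le:
  fixes g h :: "'a::euclidean_space \<Rightarrow> real"
  assumes u: "norm u = 1"
    and antimono: "\<And>v w. norm v \<le> norm w \<Longrightarrow> g w \<le> g v"
    and gm: "g \<in> borel_measurable borel" and gb: "\<And>y. \<bar>g y\<bar> \<le> 1"
    and hm: "h \<in> borel_measurable borel" and hi: "integrable lborel h"
    and dom: "\<forall>y\<in>hminus u a. h y \<le> h (hreflect u a y)"
    and x: "x \<in> hminus u a"
  shows "cap_field g h x \<le> cap_field g h (hreflect u a x)"
proof -
  have radial: "g v = g w" if "norm v = norm w" for v w
    using antimono[of v w] antimono[of w v] that by simp
  have "2 * (cap_field g h (hreflect u a x) - cap_field g h x)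
          = (\<integral>z. (h (hreflect u a z) - h z) * (g (x - z) - g (x - hreflect u a z)) \<partial>lborel)"
    using u radial gm gb hm hi by (rule cap_field_hreflect_diff)
  also have "\<dots> \<ge> 0"
    using hreflect_dominated_product_nonneg[OF u antimono dom x]
    by (intro Bochner_Integration.integral_nonneg) simp
  finally show ?thesis
    by simp
qed

lemma borel_measurable_cap_process_Suc:
  assumes kernel: "cap_kernel g gt L" and process: "cap_process g \<gamma> \<psi>"
    and "integrable lebesgue (\<psi> s)" and "\<And>x. 0 \<le> \<psi> s x"
  shows "\<psi> (Suc s) \<in> borel_measurable borel"
proof -
  have lip: "L-lipschitz_on UNIV g" and gb: "\<And>x. 0 \<le> g x \<and> g x \<le> 1"
    using kernel unfolding cap_kernel_def by blast+
  have mono: "mono_on {0..} (\<gamma> s)"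
    and step: "\<And>x. \<psi> (Suc s) x = \<gamma> s (cap_field g (\<psi> s) x)"
    using process unfolding cap_process_def by blast+
  have "continuous_on UNIV (cap_field g (\<psi> s))"
    using lip _ assms(3) by (rule continuous_on_cap_field) (use gb in auto)
  then have "cap_field g (\<psi> s) \<in> borel_measurable borel"
    by (rule borel_measurable_continuous_onI)
  with mono have "(\<lambda>x. \<gamma> s (cap_field g (\<psi> s) x)) \<in> borel_measurable borel"
    by (rule borel_measurable_mono_on_comp) (use assms(4) gb in \<open>auto intro: cap_field_nonneg\<close>)
  moreover have "\<psi> (Suc s) = (\<lambda>x. \<gamma> s (cap_field g (\<psi> s) x))"
    by (rule ext) (rule step)
  ultimately show ?thesis
    by simp
qed

lemma cap_process_integrable_bounded:
  assumes kernel: "cap_kernel g gt L" and process: "cap_process g \<gamma> \<psi>"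
  shows "integrable lebesgue (\<psi> s) \<and> (\<forall>x. 0 \<le> \<psi> s x \<and> \<psi> s x \<le> 1)"
proof (induction s)
  case 0
  then show ?case
    using process unfolding cap_process_def by blast
next
  case (Suc s)
  have step: "\<And>x. \<psi> (Suc s) x = \<gamma> s (cap_field g (\<psi> s) x)"
    and \<gamma>_range: "\<And>r. r \<ge> 0 \<Longrightarrow> 0 \<le> \<gamma> s r \<and> \<gamma> s r \<le> 1"
    using process unfolding cap_process_def by blast+
  obtain R where R: "\<And>x. norm x > R \<Longrightarrow> \<gamma> s (cap_field g (\<psi> s) x) = 0"
    using process unfolding cap_process_def by blast
  have bounds: "0 \<le> \<psi> (Suc s) x \<and> \<psi> (Suc s) x \<le> 1" for x
    using Suc.IH kernel unfolding step cap_kernel_def by (auto intro!: \<gamma>_range cap_field_nonneg)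
  have cball: "integrable lebesgue (indicator (cball (0::'a) R) :: 'a \<Rightarrow> real)"
    using emeasure_lborel_cball_finite[of "0::'a" R] by (intro integrable_real_indicator) auto
  have meas: "\<psi> (Suc s) \<in> borel_measurable lebesgue"
    using borel_measurable_cap_process_Suc[OF kernel process] Suc.IH
    by (intro measurable_completion) simp
  have "norm (\<psi> (Suc s) x) \<le> norm (indicator (cball (0::'a) R) x :: real)" for x
    using R[of x] bounds[of x] by (cases "norm x > R") (auto simp: step indicator_def)
  then have "integrable lebesgue (\<psi> (Suc s))"
    using Bochner_Integration.integrable_bound[OF cball meas] by simp
  with bounds show ?case
    by blast
qed

(* The reflection z \<mapsto> z^H is handled through lborel, which needs \<psi> s to be Borel measurable;
   \<psi> 0 is only Lebesgue measurable, but every later \<psi> s is Borel.  This is where t \<ge> 1 is used. *)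
lemma cap_process_hreflect_step:
  assumes kernel: "cap_kernel g gt L" and process: "cap_process g \<gamma> \<psi>" and u: "norm u = 1"
    and dom: "\<forall>x\<in>hminus u a. \<psi> (Suc s) x \<le> \<psi> (Suc s) (hreflect u a x)"
  shows "\<forall>x\<in>hminus u a. \<psi> (Suc (Suc s)) x \<le> \<psi> (Suc (Suc s)) (hreflect u a x)"
proof
  fix x assume x: "x \<in> hminus u a"
  have gb: "\<And>y. 0 \<le> g y \<and> g y \<le> 1" and "L-lipschitz_on UNIV g"
    using kernel unfolding cap_kernel_def by blast+
  then have gm: "g \<in> borel_measurable borel"
    by (intro borel_measurable_continuous_onI lipschitz_on_continuous_on)
  have reg: "integrable lebesgue (\<psi> s')" "\<And>y. 0 \<le> \<psi> s' y" for s'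
    using cap_process_integrable_bounded[OF kernel process, of s'] by blast+
  have hm: "\<psi> (Suc s) \<in> borel_measurable borel"
    using kernel process reg by (rule borel_measurable_cap_process_Suc)
  then have hi: "integrable lborel (\<psi> (Suc s))"
    using reg(1) integrable_completion[of "\<psi> (Suc s)" lborel] by simp
  have "cap_field g (\<psi> (Suc s)) x \<le> cap_field g (\<psi> (Suc s)) (hreflect u a x)"
    using u cap_kernel_antimono[OF kernel] gm _ hm hi dom x
    by (rule cap_field_hreflect_le) (use gb in auto)
  moreover have mono: "mono_on {0..} (\<gamma> (Suc s))"
    and step: "\<And>y. \<psi> (Suc (Suc s)) y = \<gamma> (Suc s) (cap_field g (\<psi> (Suc s)) y)"
    using process unfolding cap_process_def by blast+
  ultimately show "\<psi> (Suc (Suc s)) x \<le> \<psi> (Suc (Suc s)) (hreflect u a x)"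
    unfolding step using reg(2) gb by (intro mono_onD[OF mono]) (auto intro: cap_field_nonneg)
qed

theorem lemma1:
  fixes g :: "'a::euclidean_space \<Rightarrow> real" and gt :: "real \<Rightarrow> real" and L :: real
    and \<gamma> :: "nat \<Rightarrow> real \<Rightarrow> real" and \<psi> :: "nat \<Rightarrow> 'a \<Rightarrow> real"
    and u :: 'a and a :: real and t :: nat
  assumes "cap_kernel g gt L"
    and "cap_process g \<gamma> \<psi>"
    and "norm u = 1"
    and "t \<ge> 1"
    and "\<forall>x\<in>hminus u a. \<psi> t x \<le> \<psi> t (hreflect u a x)"
  shows "\<forall>s\<ge>t. \<forall>x\<in>hminus u a. \<psi> s x \<le> \<psi> s (hreflect u a x)"
proof (intro allI impI)
  fix s assume "t \<le> s"
  then show "\<forall>x\<in>hminus u a. \<psi> s x \<le> \<psi> s (hreflect u a x)"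
  proof (induction s rule: nat_induct_at_least)
    case base
    show ?case using assms(5) .
  next
    case (Suc s)
    then obtain k where k: "s = Suc k"
      using assms(4) not0_implies_Suc by fastforce
    show ?case
      using Suc.IH cap_process_hreflect_step[OF assms(1-3), where s=k] unfolding k by blast
  qed
qed

end
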